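(* Let $E$, $F$, $H_0$, $H_1$ be Hilbert spaces and let $L:E\to F$, $r_0:E\to H_0$, $r_1:E\to H_1$ be bounded linear maps such that $r_j\oplus L:E\to H_j\oplus F$ is an isomorphism for $j=0$ and for $j=1$. Let $Q:H_0\to H_1$ be the isomorphism $Q:=(r_1|_{\ker L})\circ(r_0|_{\ker L})^{-1}$ (note that $r_j$ restricts to an isomorphism $\ker(L)\to H_j$). Assume in addition that $r_0\oplus r_1:E\to H_0\oplus H_1$ is onto. Let $B_j\subset H_j$ ($j=0,1$) be closed linear subspaces and let $k\in\mathbb{Z}$. Then the following are equivalent: (i) The pair $(B_0,Q^{-1}B_1)$ is a Fredholm pair of index $k$ in $H_0$; (ii) The pair $(QB_0,B_1)$ is a Fredholm pair of index $k$ in $H_1$; (iii) The operator $(\pi_{B_0^\perp}\circ r_0)\oplus(\pi_{B_1^\perp}\circ r_1)\oplus L:E\to B_0^\perp\oplus B_1^\perp\oplus F$ is Fredholm of index $k$; (iv) The restriction $L:\ker(\pi_{B_0^\perp}\circ r_0)\cap\ker(\pi_{B_1^\perp}\circ r_1)\to F$ is a Fredholm operator of index $k$.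
   Context: For a closed subspace $V$ of a Hilbert space $H$, $\pi_V:H\to V$ denotes the orthogonal projection onto $V$. A pair $(B,B')$ of closed linear subspaces of a Hilbert space $H$ is called a Fredholm pair if $B\cap B'$ is finite dimensional and $B+B'$ is closed and of finite codimension in $H$; its index is $\mathrm{ind}(B,B')=\dim(B\cap B')-\dim(H/(B+B'))$. *)

theory Defs
  imports "HOL-Analysis.Analysis"
begin

text \<open>Real Hilbert spaces are modelled as types of class real_inner + complete_space.\<close>

definition closed_subspace :: "'a::real_normed_vector set \<Rightarrow> bool" where
  "closed_subspace V \<longleftrightarrow> subspace V \<and> closed V"

definition fin_dim :: "'a::real_vector set \<Rightarrow> bool" where
  "fin_dim S \<longleftrightarrow> (\<exists>B. finite B \<and> span B = S)"

definition sum_set :: "'a::real_vector set \<Rightarrow> 'a set \<Rightarrow> 'a set" where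
  "sum_set R S = {x + y | x y. x \<in> R \<and> y \<in> S}"

definition finite_codim :: "'a::real_vector set \<Rightarrow> 'a set \<Rightarrow> bool" where
  "finite_codim C R \<longleftrightarrow> (\<exists>S. subspace S \<and> S \<subseteq> C \<and> fin_dim S \<and> sum_set R S = C)"

text \<open>codim C R = dim (C / R): the least dimension of a finite-dimensional complement.\<close>
definition codim :: "'a::real_vector set \<Rightarrow> 'a set \<Rightarrow> nat" where
  "codim C R = (LEAST n. \<exists>S. subspace S \<and> S \<subseteq> C \<and> fin_dim S \<and> dim S = n \<and> sum_set R S = C)"

definition orth_proj :: "'a::real_inner set \<Rightarrow> 'a \<Rightarrow> 'a" where
  "orth_proj V x = (THE y. y \<in> V \<and> (\<forall>v\<in>V. inner (x - y) v = 0))"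

definition fredholm_pair :: "'a::{real_inner,complete_space} set \<Rightarrow> 'a set \<Rightarrow> bool" where
  "fredholm_pair B B' \<longleftrightarrow> closed_subspace B \<and> closed_subspace B' \<and>
     fin_dim (B \<inter> B') \<and> closed (sum_set B B') \<and> finite_codim UNIV (sum_set B B')"

definition fredholm_pair_index :: "'a::{real_inner,complete_space} set \<Rightarrow> 'a set \<Rightarrow> int" where
  "fredholm_pair_index B B' = int (dim (B \<inter> B')) - int (codim UNIV (sum_set B B'))"

definition fredholm_op :: "'a::real_normed_vector set \<Rightarrow> 'b::real_normed_vector set \<Rightarrow> ('a \<Rightarrow> 'b) \<Rightarrow> bool" where
  "fredholm_op D C T \<longleftrightarrow> closed_subspace D \<and> closed_subspace C \<and> bounded_linear T \<and>
     T ` D \<subseteq> C \<and> fin_dim {x \<in> D. T x = 0} \<and> closed (T ` D) \<and> finite_codim C (T ` D)"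

definition fredholm_op_index :: "'a::real_normed_vector set \<Rightarrow> 'b::real_normed_vector set \<Rightarrow> ('a \<Rightarrow> 'b) \<Rightarrow> int" where
  "fredholm_op_index D C T = int (dim {x \<in> D. T x = 0}) - int (codim C (T ` D))"

end

theory Submission
  imports Defs
begin

text \<open>
  Since \<open>r\<^sub>j \<oplus> L\<close> is an isomorphism, \<open>Q\<close> is a bounded isomorphism, and transporting the pair
  along \<open>Q\<close> gives (i) \<open>\<Leftrightarrow>\<close> (ii). Let \<open>D = {x. r\<^sub>0 x \<in> B\<^sub>0 \<and> r\<^sub>1 x \<in> B\<^sub>1}\<close> be the domain in (iv).
  The map \<open>r\<^sub>0\<close> sends \<open>ker L \<inter> D\<close> isomorphically onto \<open>B\<^sub>0 \<inter> Q\<^sup>-\<^sup>1 B\<^sub>1\<close>, and \<open>L D\<close> is the preimage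
  of \<open>B\<^sub>0 + Q\<^sup>-\<^sup>1 B\<^sub>1\<close> under the bounded surjection \<open>f \<mapsto> Q\<^sup>-\<^sup>1 (r\<^sub>1 x\<^sub>f)\<close>, where \<open>x\<^sub>f\<close> solves
  \<open>L x = f\<close>, \<open>r\<^sub>0 x = 0\<close>; so the kernels, the closedness and the codimensions of the ranges
  correspond, giving (i) \<open>\<Leftrightarrow>\<close> (iv). The operator in (iii) has the same kernel as \<open>L\<close> on \<open>D\<close>; its
  range meets the fibre \<open>0 \<times> 0 \<times> F\<close> exactly in \<open>L D\<close> and, as \<open>r\<^sub>0 \<oplus> r\<^sub>1\<close> is onto, fills
  \<open>B\<^sub>0\<^sup>\<bottom> \<times> B\<^sub>1\<^sup>\<bottom> \<times> F\<close> modulo that fibre, giving (iii) \<open>\<Leftrightarrow>\<close> (iv). Closedness is transported along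
  bounded surjections by the open mapping theorem.
\<close>

section \<open>Orthogonal projections in Hilbert spaces\<close>

lemma parallelogram_law:
  fixes a b :: "'a::real_inner"
  shows "norm (a + b)^2 + norm (a - b)^2 = 2 * norm a ^ 2 + 2 * norm b ^ 2"
  by (simp add: power2_norm_eq_inner inner_add inner_diff inner_commute algebra_simps)

lemma Cauchy_minimizing_sequence:
  fixes S :: "'a::real_inner set"
  assumes "convex S" and min: "\<And>v. v \<in> S \<Longrightarrow> d \<le> norm (x - v)" and vs: "\<And>n. vs n \<in> S"
    and lim: "(\<lambda>n. norm (x - vs n)) \<longlonglongrightarrow> d"
  shows "Cauchy vs"
proof (rule metric_CauchyI)
  fix e :: real assume "e > 0"
  have "0 \<le> d" using lim by (rule LIMSEQ_le_const) simp
  have "(\<lambda>n. norm (x - vs n)^2) \<longlonglongrightarrow> d^2" by (intro tendsto_intros lim)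
  then have "\<forall>\<^sub>F n in sequentially. norm (x - vs n)^2 < d^2 + e^2/4"
    using \<open>e > 0\<close> by (intro order_tendstoD) auto
  then obtain N where N: "\<And>n. n \<ge> N \<Longrightarrow> norm (x - vs n)^2 < d^2 + e^2/4"
    by (auto simp: eventually_sequentially)
  show "\<exists>M. \<forall>m\<ge>M. \<forall>n\<ge>M. dist (vs m) (vs n) < e"
  proof (intro exI allI impI)
    fix m n assume "m \<ge> N" "n \<ge> N"
    have "(1/2) *\<^sub>R vs m + (1/2) *\<^sub>R vs n \<in> S"
      using \<open>convex S\<close> vs by (intro convexD) auto
    moreover have "x - ((1/2) *\<^sub>R vs m + (1/2) *\<^sub>R vs n) = (1/2) *\<^sub>R ((x - vs m) + (x - vs n))"
      by (simp add: algebra_simps flip: scaleR_add_right)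
    ultimately have "2 * d \<le> norm ((x - vs m) + (x - vs n))"
      using min by fastforce
    then have "4 * d^2 \<le> norm ((x - vs m) + (x - vs n))^2"
      using \<open>0 \<le> d\<close> power_mono[of "2 * d" _ 2] by (simp add: power_mult_distrib)
    moreover have "norm ((x - vs m) + (x - vs n))^2 + norm (vs m - vs n)^2
        = 2 * norm (x - vs m)^2 + 2 * norm (x - vs n)^2"
      using parallelogram_law[of "x - vs m" "x - vs n"] by (simp add: norm_minus_commute)
    ultimately have "norm (vs m - vs n)^2 < e^2"
      using N[OF \<open>m \<ge> N\<close>] N[OF \<open>n \<ge> N\<close>] by linarith
    then show "dist (vs m) (vs n) < e"
      using \<open>e > 0\<close> by (simp add: dist_norm power2_less_imp_less)
  qed
qed

lemma closest_point_exists_complete: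
  fixes S :: "'a::{real_inner,complete_space} set"
  assumes "convex S" and "closed S" and "S \<noteq> {}"
  obtains v where "v \<in> S" and "\<And>w. w \<in> S \<Longrightarrow> norm (x - v) \<le> norm (x - w)"
proof -
  define d where "d = (INF v\<in>S. norm (x - v))"
  have bdd: "bdd_below ((\<lambda>v. norm (x - v)) ` S)" by (rule bdd_belowI[of _ 0]) auto
  have d_le: "d \<le> norm (x - v)" if "v \<in> S" for v
    unfolding d_def using bdd that by (rule cINF_lower)
  have "\<exists>v\<in>S. norm (x - v) < d + 1 / real (Suc n)" for n
    unfolding d_def using \<open>S \<noteq> {}\<close> bdd by (subst cINF_less_iff[symmetric]) auto
  then obtain vs where vs: "\<And>n. vs n \<in> S" and vs_less: "\<And>n. norm (x - vs n) < d + 1 / real (Suc n)"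
    by metis
  have lim: "(\<lambda>n. norm (x - vs n)) \<longlonglongrightarrow> d"
  proof (rule tendsto_sandwich[of "\<lambda>n. d" _ _ "\<lambda>n. d + 1 / real (Suc n)"])
    show "(\<lambda>n. d + 1 / real (Suc n)) \<longlonglongrightarrow> d"
      using tendsto_add[OF tendsto_const LIMSEQ_inverse_real_of_nat] by (simp add: divide_inverse)
    show "\<forall>\<^sub>F n in sequentially. d \<le> norm (x - vs n)"
      using d_le vs by simp
    show "\<forall>\<^sub>F n in sequentially. norm (x - vs n) \<le> d + 1 / real (Suc n)"
      using vs_less less_imp_le by (intro always_eventually) blast
  qed simp
  obtain v where "vs \<longlonglongrightarrow> v"
    using Cauchy_minimizing_sequence[OF \<open>convex S\<close> d_le vs lim] convergent_eq_Cauchy by blast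
  then have "v \<in> S" and "(\<lambda>n. norm (x - vs n)) \<longlonglongrightarrow> norm (x - v)"
    using \<open>closed S\<close> vs closed_sequentially by (blast, intro tendsto_intros)
  then show thesis
    using that d_le LIMSEQ_unique[OF lim] by metis
qed

lemma closest_point_subspace_orthogonal:
  fixes V :: "'a::real_inner set"
  assumes "subspace V" and "v \<in> V" and min: "\<And>w. w \<in> V \<Longrightarrow> norm (x - v) \<le> norm (x - w)"
    and "w \<in> V"
  shows "inner (x - v) w = 0"
proof (rule ccontr)
  assume c: "inner (x - v) w \<noteq> 0"
  then have ww: "inner w w > 0" by auto
  define t where "t = inner (x - v) w / inner w w"
  have "v + t *\<^sub>R w \<in> V" using assms by (simp add: subspace_add subspace_scale)
  then have "norm (x - v)^2 \<le> norm ((x - v) - t *\<^sub>R w)^2"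
    using min by (simp add: diff_diff_eq power_mono)
  also have "\<dots> = norm (x - v)^2 - 2 * t * inner (x - v) w + t^2 * inner w w"
    unfolding power2_norm_eq_inner
    by (simp add: inner_diff_left inner_diff_right inner_commute power2_eq_square algebra_simps)
  also have "\<dots> = norm (x - v)^2 - (inner (x - v) w)^2 / inner w w"
    using ww by (simp add: t_def power2_eq_square field_simps)
  finally show False using c ww by (simp add: field_simps)
qed

lemma orthogonal_residual_unique:
  fixes V :: "'a::real_inner set"
  assumes "subspace V" and "y \<in> V" and "\<And>v. v \<in> V \<Longrightarrow> inner (x - y) v = 0"
    and "y' \<in> V" and "\<And>v. v \<in> V \<Longrightarrow> inner (x - y') v = 0"
  shows "y = y'"
proof -
  have "y' - y \<in> V" using assms by (simp add: subspace_diff)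
  have "inner (y' - y) (y' - y) = inner (x - y) (y' - y) - inner (x - y') (y' - y)"
    by (simp add: inner_diff_left)
  also have "\<dots> = 0" using assms \<open>y' - y \<in> V\<close> by simp
  finally show ?thesis by simp
qed

lemma
  fixes V :: "'a::{real_inner,complete_space} set"
  assumes "closed_subspace V"
  shows orth_proj_in: "orth_proj V x \<in> V"
    and orth_proj_orthogonal: "v \<in> V \<Longrightarrow> inner (x - orth_proj V x) v = 0"
proof -
  have V: "subspace V" "closed V" using assms by (auto simp: closed_subspace_def)
  obtain p where "p \<in> V" "\<And>w. w \<in> V \<Longrightarrow> norm (x - p) \<le> norm (x - w)"
    using closest_point_exists_complete[of V x] V subspace_imp_convex subspace_0 by blast
  then have "p \<in> V \<and> (\<forall>v\<in>V. inner (x - p) v = 0)"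
    using closest_point_subspace_orthogonal[OF V(1)] by blast
  then have "\<exists>!y. y \<in> V \<and> (\<forall>v\<in>V. inner (x - y) v = 0)"
    using orthogonal_residual_unique[OF V(1)] by blast
  then have "orth_proj V x \<in> V \<and> (\<forall>v\<in>V. inner (x - orth_proj V x) v = 0)"
    unfolding orth_proj_def by (rule theI')
  then show "orth_proj V x \<in> V" and "v \<in> V \<Longrightarrow> inner (x - orth_proj V x) v = 0"
    by blast+
qed

lemma orth_proj_eqI:
  fixes V :: "'a::{real_inner,complete_space} set"
  assumes "closed_subspace V" and "y \<in> V" and "\<And>v. v \<in> V \<Longrightarrow> inner (x - y) v = 0"
  shows "orth_proj V x = y"
  using orthogonal_residual_unique[of V "orth_proj V x" x y] assms
    orth_proj_in[OF assms(1)] orth_proj_orthogonal[OF assms(1)]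
  by (simp add: closed_subspace_def)

lemma orth_proj_id:
  fixes V :: "'a::{real_inner,complete_space} set"
  assumes "closed_subspace V" and "y \<in> V"
  shows "orth_proj V y = y"
  using orth_proj_eqI[OF assms] by simp

lemma bounded_linear_orth_proj:
  fixes V :: "'a::{real_inner,complete_space} set"
  assumes V: "closed_subspace V"
  shows "bounded_linear (orth_proj V)"
proof (rule bounded_linear_intro)
  have "subspace V" using V by (simp add: closed_subspace_def)
  note in_V = orth_proj_in[OF V] and orth = orth_proj_orthogonal[OF V]
  show "orth_proj V (x + y) = orth_proj V x + orth_proj V y" for x y
  proof (rule orth_proj_eqI[OF V])
    show "orth_proj V x + orth_proj V y \<in> V" using in_V \<open>subspace V\<close> by (simp add: subspace_add)
    have "x + y - (orth_proj V x + orth_proj V y) = (x - orth_proj V x) + (y - orth_proj V y)"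
      by simp
    then show "inner (x + y - (orth_proj V x + orth_proj V y)) v = 0" if "v \<in> V" for v
      using orth[OF that] by (simp only: inner_add_left)
  qed
  show "orth_proj V (r *\<^sub>R x) = r *\<^sub>R orth_proj V x" for r x
  proof (rule orth_proj_eqI[OF V])
    show "r *\<^sub>R orth_proj V x \<in> V" using in_V \<open>subspace V\<close> by (simp add: subspace_scale)
    show "inner (r *\<^sub>R x - r *\<^sub>R orth_proj V x) v = 0" if "v \<in> V" for v
      using orth[OF that] by (simp flip: scaleR_diff_right)
  qed
  show "norm (orth_proj V x) \<le> norm x * 1" for x
  proof -
    have "norm x ^ 2 = norm (x - orth_proj V x) ^ 2 + norm (orth_proj V x) ^ 2"
      using orth[OF in_V, of x] unfolding power2_norm_eq_inner
      by (simp add: inner_diff_left inner_diff_right inner_commute)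
    then have "norm (orth_proj V x) ^ 2 \<le> norm x ^ 2" by simp
    then show ?thesis by (simp add: power2_le_iff_abs_le)
  qed
qed

lemma closed_subspace_orthogonal_comp: "closed_subspace (orthogonal_comp (B :: 'a::real_inner set))"
proof -
  have "orthogonal_comp B = (\<Inter>y\<in>B. {x. inner y x = 0})"
    by (auto simp: orthogonal_comp_def orthogonal_def)
  moreover have "closed {x. inner y x = 0}" for y :: 'a
    by (intro closed_Collect_eq continuous_intros)
  ultimately show ?thesis
    unfolding closed_subspace_def by (metis subspace_orthogonal_comp closed_INT)
qed

lemma orth_proj_orthogonal_comp_eq_0_iff:
  fixes B :: "'a::{real_inner,complete_space} set"
  assumes B: "closed_subspace B"
  shows "orth_proj (orthogonal_comp B) z = 0 \<longleftrightarrow> z \<in> B"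
proof
  assume "z \<in> B"
  then show "orth_proj (orthogonal_comp B) z = 0"
    by (intro orth_proj_eqI[OF closed_subspace_orthogonal_comp])
       (auto simp: orthogonal_comp_def orthogonal_def inner_commute)
next
  assume z: "orth_proj (orthogonal_comp B) z = 0"
  define p where "p = orth_proj B z"
  have "z - p \<in> orthogonal_comp B"
    using orth_proj_orthogonal[OF B] by (auto simp: p_def orthogonal_comp_def orthogonal_def inner_commute)
  then have "inner z (z - p) = 0" and "inner p (z - p) = 0"
    using orth_proj_orthogonal[OF closed_subspace_orthogonal_comp, of "z - p" B z] z
      orth_proj_in[OF B] by (auto simp: p_def orthogonal_comp_def orthogonal_def)
  then have "inner (z - p) (z - p) = 0" by (simp add: inner_diff_left)
  then have "z = p" by simp
  then show "z \<in> B" using orth_proj_in[OF B] unfolding p_def by metis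
qed

lemma orth_proj_orthogonal_comp_residual:
  fixes B :: "'a::{real_inner,complete_space} set"
  assumes "closed_subspace B"
  shows "z - orth_proj (orthogonal_comp B) z \<in> B"
proof -
  let ?P = "orth_proj (orthogonal_comp B)"
  have "linear ?P"
    using bounded_linear_orth_proj[OF closed_subspace_orthogonal_comp] by (rule bounded_linear.linear)
  then have "?P (z - ?P z) = 0"
    by (simp add: linear_diff orth_proj_id[OF closed_subspace_orthogonal_comp] orth_proj_in[OF closed_subspace_orthogonal_comp])
  then show ?thesis using orth_proj_orthogonal_comp_eq_0_iff[OF assms] by blast
qed

section \<open>The open mapping theorem\<close>

text \<open>The library's \<open>summable_norm_cancel\<close> is stated for class \<open>banach\<close>, and the sort
  \<open>{real_normed_vector, complete_space}\<close> is not known to be contained in \<open>banach\<close>.\<close>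

lemma summable_norm_cancel_complete:
  fixes f :: "nat \<Rightarrow> 'a::{real_normed_vector,complete_space}"
  assumes "summable (\<lambda>n. norm (f n))"
  shows "summable f"
proof -
  have "Cauchy (\<lambda>n. \<Sum>k<n. f k)"
  proof (rule metric_CauchyI)
    fix e :: real assume "e > 0"
    then obtain N where N: "\<And>m n. m \<ge> N \<Longrightarrow> norm (\<Sum>k=m..<n. norm (f k)) < e"
      using assms summable_Cauchy by blast
    have "dist (\<Sum>k<m. f k) (\<Sum>k<n. f k) < e" if "N \<le> m" "m \<le> n" for m n
    proof -
      have "dist (\<Sum>k<m. f k) (\<Sum>k<n. f k) = norm (\<Sum>k=m..<n. f k)"
        using that by (simp add: dist_norm norm_minus_commute atLeast0LessThan[symmetric]
            flip: sum.atLeastLessThan_concat[of 0 m n])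
      also have "\<dots> \<le> (\<Sum>k=m..<n. norm (f k))" by (rule norm_sum)
      also have "\<dots> < e" using N[OF \<open>N \<le> m\<close>, of n] by simp
      finally show ?thesis .
    qed
    then show "\<exists>M. \<forall>m\<ge>M. \<forall>n\<ge>M. dist (\<Sum>k<m. f k) (\<Sum>k<n. f k) < e"
      by (metis dist_commute nle_le)
  qed
  then show ?thesis by (simp add: summable_iff_convergent Cauchy_convergent)
qed

lemma interior_closure_image_ball_nonempty:
  fixes T :: "'a::real_normed_vector \<Rightarrow> 'b::{real_normed_vector,complete_space}"
  assumes "surj T"
  obtains R where "R > 0" and "interior (closure (T ` ball 0 R)) \<noteq> {}"
proof -
  let ?G = "range (\<lambda>n. closure (T ` ball 0 (real (Suc n))))"
  have "\<Union>?G = UNIV"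
  proof -
    have "y \<in> \<Union>?G" for y
    proof -
      obtain x where "T x = y" using assms by (metis surjD)
      moreover obtain n where "norm x < real (Suc n)"
        by (metis reals_Archimedean2 less_trans lessI of_nat_less_iff)
      ultimately show ?thesis using closure_subset by fastforce
    qed
    then show ?thesis by blast
  qed
  then have "\<not> (\<forall>n. interior (closure (T ` ball 0 (real (Suc n)))) = {})"
    using Baire_category_alt[of euclidean ?G]
    by (auto simp: completely_metrizable_space_euclidean euclidean_interior_of)
  then show thesis using that by (metis of_nat_0_less_iff zero_less_Suc)
qed

lemma approximate_preimage_small:
  fixes T :: "'a::real_normed_vector \<Rightarrow> 'b::real_normed_vector"
  assumes "linear T" and ball: "ball y0 \<epsilon> \<subseteq> closure (T ` ball 0 R)"
    and "norm y < \<epsilon>" and "\<eta> > 0"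
  obtains x where "norm x < 2 * R" and "norm (y - T x) < \<eta>"
proof -
  have "\<epsilon> > 0" using \<open>norm y < \<epsilon>\<close> norm_ge_zero[of y] by linarith
  then have "y0 + y \<in> closure (T ` ball 0 R)" and "y0 \<in> closure (T ` ball 0 R)"
    using ball \<open>norm y < \<epsilon>\<close> by (auto simp: dist_norm)
  then obtain z1 z2 where "z1 \<in> T ` ball 0 R" "dist z1 (y0 + y) < \<eta>/2"
    and "z2 \<in> T ` ball 0 R" "dist z2 y0 < \<eta>/2"
    using \<open>\<eta> > 0\<close> unfolding closure_approachable by (meson half_gt_zero)
  then obtain x1 x2 where x1: "norm x1 < R" "norm (y0 + y - T x1) < \<eta>/2"
    and x2: "norm x2 < R" "norm (y0 - T x2) < \<eta>/2"
    by (auto simp: dist_norm norm_minus_commute)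
  have "y - T (x1 - x2) = (y0 + y - T x1) - (y0 - T x2)"
    using \<open>linear T\<close> by (simp add: linear_diff algebra_simps)
  then have "norm (y - T (x1 - x2)) \<le> norm (y0 + y - T x1) + norm (y0 - T x2)"
    by (metis norm_triangle_ineq4)
  then have "norm (y - T (x1 - x2)) < \<eta>" using x1 x2 by linarith
  moreover have "norm (x1 - x2) < 2 * R"
    using x1 x2 norm_triangle_ineq4[of x1 x2] by simp
  ultimately show thesis using that by blast
qed

lemma approximate_preimage:
  fixes T :: "'a::real_normed_vector \<Rightarrow> 'b::{real_normed_vector,complete_space}"
  assumes "linear T" and "surj T"
  obtains K where "K > 0" and "\<And>y. \<exists>x. norm x \<le> K * norm y \<and> norm (y - T x) \<le> norm y / 2"
proof -
  obtain R where "R > 0" and "interior (closure (T ` ball 0 R)) \<noteq> {}"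
    using interior_closure_image_ball_nonempty[OF \<open>surj T\<close>] by blast
  then obtain y0 \<epsilon> where "\<epsilon> > 0" and ball: "ball y0 \<epsilon> \<subseteq> closure (T ` ball 0 R)"
    by (metis equals0I mem_interior)
  define K where "K = 4 * R / \<epsilon>"
  have "\<exists>x. norm x \<le> K * norm y \<and> norm (y - T x) \<le> norm y / 2" for y
  proof (cases "y = 0")
    case True
    then show ?thesis using \<open>linear T\<close> by (intro exI[of _ 0]) (simp add: linear_0)
  next
    case False
    define c where "c = \<epsilon> / (2 * norm y)"
    have "c > 0" and "norm (c *\<^sub>R y) < \<epsilon>" and "c * norm y / 2 > 0"
      using False \<open>\<epsilon> > 0\<close> by (auto simp: c_def)
    then obtain x where x: "norm x < 2 * R" "norm (c *\<^sub>R y - T x) < c * norm y / 2"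
      using approximate_preimage_small[OF \<open>linear T\<close> ball] by metis
    have small_preimage: "norm ((1/c) *\<^sub>R x) \<le> K * norm y"
      using x(1) \<open>c > 0\<close> False \<open>\<epsilon> > 0\<close> by (simp add: c_def K_def field_simps)
    have "y - T ((1/c) *\<^sub>R x) = (1/c) *\<^sub>R (c *\<^sub>R y - T x)"
      using \<open>linear T\<close> \<open>c > 0\<close> by (simp add: linear_scale scaleR_diff_right)
    then have "norm (y - T ((1/c) *\<^sub>R x)) = norm (c *\<^sub>R y - T x) / c"
      using \<open>c > 0\<close> by simp
    also have "\<dots> < (c * norm y / 2) / c"
      using x(2) \<open>c > 0\<close> by (rule divide_strict_right_mono)
    finally have "norm (y - T ((1/c) *\<^sub>R x)) \<le> norm y / 2"
      using \<open>c > 0\<close> by simp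
    with small_preimage show ?thesis by blast
  qed
  moreover have "K > 0" using \<open>R > 0\<close> \<open>\<epsilon> > 0\<close> by (simp add: K_def)
  ultimately show thesis using that by blast
qed

lemma
  fixes xs :: "nat \<Rightarrow> 'a::{real_normed_vector,complete_space}"
  assumes xs_bound: "\<And>k. norm (xs k) \<le> C * (1/2)^k"
  shows summable_geometric_bound: "summable xs"
    and norm_suminf_geometric_bound: "norm (suminf xs) \<le> 2 * C"
proof -
  have geom: "(\<lambda>k. C * (1/2::real)^k) sums (2 * C)"
    using sums_mult[OF geometric_sums[of "1/2::real"], of C] by (simp add: ac_simps)
  have "0 \<le> C" using order_trans[OF norm_ge_zero xs_bound[of 0]] by simp
  have "summable (\<lambda>k. norm (xs k))"
    by (rule summable_comparison_test[OF _ sums_summable[OF geom]]) (use xs_bound in auto)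
  then show "summable xs" by (rule summable_norm_cancel_complete)
  show "norm (suminf xs) \<le> 2 * C"
  proof (rule LIMSEQ_le_const2)
    show "(\<lambda>m. norm (\<Sum>k<m. xs k)) \<longlonglongrightarrow> norm (suminf xs)"
      using summable_sums[OF \<open>summable xs\<close>] unfolding sums_def by (rule tendsto_norm)
    have "norm (\<Sum>k<m. xs k) \<le> 2 * C" for m
    proof -
      have "norm (\<Sum>k<m. xs k) \<le> (\<Sum>k<m. C * (1/2)^k)"
        using norm_sum[of xs "{..<m}"] sum_mono[of "{..<m}" "\<lambda>k. norm (xs k)", OF xs_bound]
        by linarith
      also have "\<dots> \<le> 2 * C"
        using sum_le_suminf[OF sums_summable[OF geom], of "{..<m}"] \<open>0 \<le> C\<close> sums_unique[OF geom]
        by simp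
      finally show ?thesis .
    qed
    then show "\<exists>N. \<forall>m\<ge>N. norm (\<Sum>k<m. xs k) \<le> 2 * C" by blast
  qed
qed

lemma solve_by_successive_approximation:
  fixes T :: "'a::{real_normed_vector,complete_space} \<Rightarrow> 'b::real_normed_vector"
  assumes T: "bounded_linear T" and "0 \<le> K"
    and c_bound: "\<And>y. norm (c y) \<le> K * norm y"
    and c_approx: "\<And>y. norm (y - T (c y)) \<le> norm y / 2"
  obtains x where "T x = y" and "norm x \<le> 2 * K * norm y"
proof -
  define ys where "ys k = ((\<lambda>z. z - T (c z)) ^^ k) y" for k
  define xs where "xs k = c (ys k)" for k
  have ys_Suc: "ys (Suc k) = ys k - T (xs k)" for k by (simp add: ys_def xs_def)
  have ys_bound: "norm (ys k) \<le> norm y * (1/2)^k" for k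
  proof (induction k)
    case (Suc k)
    have "norm (ys (Suc k)) \<le> norm (ys k) / 2" using c_approx by (simp add: ys_Suc xs_def)
    also have "\<dots> \<le> norm y * (1/2)^Suc k" using Suc by simp
    finally show ?case .
  qed (simp add: ys_def)
  have xs_bound: "norm (xs k) \<le> K * norm y * (1/2)^k" for k
    using order_trans[OF c_bound mult_left_mono[OF ys_bound \<open>0 \<le> K\<close>]]
    by (simp add: xs_def mult.assoc)
  have partial_sums: "(\<Sum>k<m. T (xs k)) = y - ys m" for m
  proof (induction m)
    case 0
    show ?case by (simp add: ys_def)
  next
    case (Suc m)
    then show ?case by (simp add: ys_Suc)
  qed
  have "(\<lambda>k. norm (ys k)) \<longlonglongrightarrow> 0"
  proof (rule tendsto_sandwich[of "\<lambda>k. 0" _ _ "\<lambda>k. norm y * (1/2)^k"])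
    show "\<forall>\<^sub>F k in sequentially. norm (ys k) \<le> norm y * (1/2)^k"
      using ys_bound by simp
    show "(\<lambda>k. norm y * (1/2::real)^k) \<longlonglongrightarrow> 0"
      by (intro tendsto_mult_right_zero LIMSEQ_power_zero) auto
  qed simp_all
  then have "ys \<longlonglongrightarrow> 0" by (rule tendsto_norm_zero_cancel)
  then have "(\<lambda>k. T (xs k)) sums y"
    unfolding sums_def partial_sums using tendsto_diff[OF tendsto_const[of y]] by fastforce
  then have "T (suminf xs) = y"
    using bounded_linear.suminf[OF T summable_geometric_bound[OF xs_bound]]
      sums_unique[of "\<lambda>k. T (xs k)" y] by simp
  then show thesis
    using that[of "suminf xs"] norm_suminf_geometric_bound[OF xs_bound] by (simp add: mult.assoc)
qed

lemma surj_bounded_linear_preimage_bound: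
  fixes T :: "'a::{real_normed_vector,complete_space} \<Rightarrow> 'b::{real_normed_vector,complete_space}"
  assumes "bounded_linear T" and "surj T"
  obtains M where "M > 0" and "\<And>y. \<exists>x. T x = y \<and> norm x \<le> M * norm y"
proof -
  obtain K where "K > 0" and "\<And>y. \<exists>x. norm x \<le> K * norm y \<and> norm (y - T x) \<le> norm y / 2"
    using approximate_preimage \<open>surj T\<close> bounded_linear.linear[OF \<open>bounded_linear T\<close>] by blast
  then obtain c where "\<And>y. norm (c y) \<le> K * norm y" and "\<And>y. norm (y - T (c y)) \<le> norm y / 2"
    by metis
  then have "\<exists>x. T x = y \<and> norm x \<le> 2 * K * norm y" for y
    using solve_by_successive_approximation[OF \<open>bounded_linear T\<close>] \<open>K > 0\<close> by (metis less_imp_le)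
  then show thesis using that[of "2 * K"] \<open>K > 0\<close> by simp
qed

lemma open_mapping:
  fixes T :: "'a::{real_normed_vector,complete_space} \<Rightarrow> 'b::{real_normed_vector,complete_space}"
  assumes T: "bounded_linear T" and "surj T" and "open U"
  shows "open (T ` U)"
proof (rule openI)
  obtain M where "M > 0" and M: "\<And>y. \<exists>x. T x = y \<and> norm x \<le> M * norm y"
    using surj_bounded_linear_preimage_bound[OF T \<open>surj T\<close>] by blast
  fix y assume "y \<in> T ` U"
  then obtain x where "x \<in> U" "y = T x" by blast
  then obtain r where "r > 0" "ball x r \<subseteq> U" using \<open>open U\<close> open_contains_ball by blast
  have "z \<in> T ` U" if "dist y z < r / M" for z
  proof -
    obtain w where w: "T w = z - y" "norm w \<le> M * norm (z - y)" using M by blast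
    have "M * norm (z - y) < r"
      using that \<open>M > 0\<close> by (simp add: dist_norm norm_minus_commute field_simps)
    then have "x + w \<in> U" using w \<open>ball x r \<subseteq> U\<close> by (auto simp: dist_norm)
    moreover have "T (x + w) = z" using w \<open>y = T x\<close> by (simp add: linear_add[OF bounded_linear.linear[OF T]])
    ultimately show ?thesis by (metis imageI)
  qed
  then show "\<exists>e>0. ball y e \<subseteq> T ` U"
    using \<open>r > 0\<close> \<open>M > 0\<close> by (intro exI[of _ "r / M"]) auto
qed

lemma closed_vimage_surj_iff:
  fixes T :: "'a::{real_normed_vector,complete_space} \<Rightarrow> 'b::{real_normed_vector,complete_space}"
  assumes T: "bounded_linear T" and "surj T"
  shows "closed (T -` S) \<longleftrightarrow> closed S"
proof
  assume "closed (T -` S)"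
  have "- S = T ` (- (T -` S))"
  proof
    show "- S \<subseteq> T ` (- (T -` S))"
    proof
      fix y assume "y \<in> - S"
      obtain x where "y = T x" using \<open>surj T\<close> by (metis surjD)
      with \<open>y \<in> - S\<close> show "y \<in> T ` (- (T -` S))" by blast
    qed
  qed auto
  then show "closed S"
    using open_mapping[OF T \<open>surj T\<close>] \<open>closed (T -` S)\<close> by (simp add: closed_def)
qed (intro closed_vimage linear_continuous_on T)

lemma closed_saturated_image:
  fixes T :: "'a::{real_normed_vector,complete_space} \<Rightarrow> 'b::{real_normed_vector,complete_space}"
  assumes "bounded_linear T" and "surj T" and "closed Z"
    and saturated: "\<And>x x'. T x = T x' \<Longrightarrow> x \<in> Z \<Longrightarrow> x' \<in> Z"
  shows "closed (T ` Z)"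
proof -
  have "T -` (T ` Z) = Z"
  proof (intro equalityI subsetI)
    fix x assume "x \<in> T -` (T ` Z)"
    then obtain x' where "x' \<in> Z" and "T x' = T x" by auto
    then show "x \<in> Z" by (rule saturated[rotated])
  qed auto
  then show ?thesis using closed_vimage_surj_iff[OF assms(1,2), of "T ` Z"] \<open>closed Z\<close> by simp
qed

lemma bounded_linear_inv:
  fixes T :: "'a::{real_normed_vector,complete_space} \<Rightarrow> 'b::{real_normed_vector,complete_space}"
  assumes T: "bounded_linear T" and "bij T"
  shows "bounded_linear (inv T)"
proof -
  interpret T: bounded_linear T by (rule T)
  have "surj T" and "inj T" using \<open>bij T\<close> by (simp_all add: bij_is_surj bij_is_inj)
  then obtain M where M: "\<And>y. \<exists>x. T x = y \<and> norm x \<le> M * norm y"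
    using surj_bounded_linear_preimage_bound[OF T] by blast
  have inv_T [simp]: "inv T (T x) = x" for x
    using \<open>inj T\<close> by simp
  have T_inv: "T (inv T y) = y" for y
    using \<open>surj T\<close> by (rule surj_f_inv_f)
  show ?thesis
  proof (rule bounded_linear_intro)
    show "inv T (x + y) = inv T x + inv T y" for x y
      using inv_T[of "inv T x + inv T y"] by (simp only: T.add T_inv)
    show "inv T (r *\<^sub>R x) = r *\<^sub>R inv T x" for r x
      using inv_T[of "r *\<^sub>R inv T x"] by (simp only: T.scaleR T_inv)
    show "norm (inv T y) \<le> norm y * M" for y
    proof -
      obtain x where "T x = y" "norm x \<le> M * norm y" using M by blast
      then show ?thesis by (auto simp: mult.commute)
    qed
  qed
qed

section \<open>Dimension and codimension\<close>

lemma mem_sum_set: "z \<in> sum_set R S \<longleftrightarrow> (\<exists>x\<in>R. \<exists>y\<in>S. z = x + y)"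
  by (auto simp: sum_set_def)

lemma sum_set_imageE:
  assumes "z \<in> sum_set (f ` A) B"
  obtains a b where "a \<in> A" and "b \<in> B" and "z = f a + b"
  using assms by (auto simp: sum_set_def)

lemma subspace_sum_set: "subspace R \<Longrightarrow> subspace S \<Longrightarrow> subspace (sum_set R S)"
  unfolding sum_set_def by (rule subspace_sums)

lemma fin_dim_basis:
  assumes "fin_dim S"
  obtains B where "finite B" and "independent B" and "span B = S" and "card B = dim S"
proof -
  obtain A where A: "finite A" "span A = S" using assms by (auto simp: fin_dim_def)
  then have "subspace S" by auto
  obtain B where B: "B \<subseteq> S" "independent B" "S \<subseteq> span B" "card B = dim S"
    using basis_exists[of S] by blast
  have "finite B" using independent_span_bound[OF A(1) B(2)] B(1) A(2) by blast
  moreover have "span B = S" using B(1,3) \<open>subspace S\<close> by (metis span_minimal subset_antisym)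
  ultimately show thesis using B that by blast
qed

lemma
  assumes "linear f" and "subspace S" and "inj_on f S"
  shows fin_dim_inj_image_iff: "fin_dim (f ` S) \<longleftrightarrow> fin_dim S"
    and dim_inj_image: "dim (f ` S) = dim S"
proof -
  obtain B where B: "B \<subseteq> S" "independent B" "S \<subseteq> span B"
    using maximal_independent_subset[of S] by blast
  have span_B: "span B = S" using B \<open>subspace S\<close> by (metis span_minimal subset_antisym)
  have inj_B: "inj_on f (span B)" using \<open>inj_on f S\<close> span_B by simp
  have indep_fB: "independent (f ` B)"
    using linear_independent_injective_image[OF \<open>linear f\<close> B(2) inj_B] .
  have span_fB: "span (f ` B) = f ` S" using linear_span_image[OF \<open>linear f\<close>] span_B by simp
  have "inj_on f B" using inj_B span_superset inj_on_subset by blast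
  have fin_dim_iff: "fin_dim X \<longleftrightarrow> finite C" if "independent C" "span C = X" for X C
    using that independent_span_bound[OF _ \<open>independent C\<close>] span_superset
    by (fastforce simp: fin_dim_def)
  show "fin_dim (f ` S) \<longleftrightarrow> fin_dim S"
    using fin_dim_iff[OF indep_fB span_fB] fin_dim_iff[OF B(2) span_B] finite_image_iff[OF \<open>inj_on f B\<close>]
    by simp
  have "dim S = card B" using dim_eq_card[of B S] B(2) span_B \<open>subspace S\<close> span_eq_iff by metis
  moreover have "dim (f ` S) = card (f ` B)"
    using dim_eq_card[of "f ` B" "f ` S"] span_fB indep_fB by (metis span_span)
  ultimately show "dim (f ` S) = dim S" using card_image[OF \<open>inj_on f B\<close>] by simp
qed

lemma
  assumes "linear f" and "fin_dim S"
  shows fin_dim_linear_image: "fin_dim (f ` S)"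
    and dim_linear_image_le: "dim (f ` S) \<le> dim S"
proof -
  obtain B where B: "finite B" "span B = S" "card B = dim S"
    using fin_dim_basis[OF \<open>fin_dim S\<close>] by metis
  have span_fB: "span (f ` B) = f ` S" using linear_span_image[OF \<open>linear f\<close>] B by simp
  then show "fin_dim (f ` S)" using B(1) by (auto simp: fin_dim_def)
  have "dim (f ` S) \<le> card (f ` B)" using dim_le_card[of "f ` S" "f ` B"] span_fB B(1) by simp
  also have "\<dots> \<le> card B" using B(1) by (rule card_image_le)
  finally show "dim (f ` S) \<le> dim S" using B by simp
qed

definition complement_dims :: "'a::real_vector set \<Rightarrow> 'a set \<Rightarrow> nat set" where
  "complement_dims C R = {dim S | S. subspace S \<and> S \<subseteq> C \<and> fin_dim S \<and> sum_set R S = C}"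

lemma codim_eq_Least_complement_dims: "codim C R = (LEAST n. n \<in> complement_dims C R)"
  unfolding codim_def complement_dims_def by (intro arg_cong[where f = Least] ext) auto

lemma finite_codim_iff_complement_dims: "finite_codim C R \<longleftrightarrow> complement_dims C R \<noteq> {}"
  by (auto simp: finite_codim_def complement_dims_def)

lemma Least_eq_if_mutually_dominated:
  fixes M N :: "nat set"
  assumes MN: "\<And>n. n \<in> M \<Longrightarrow> \<exists>m\<in>N. m \<le> n" and NM: "\<And>n. n \<in> N \<Longrightarrow> \<exists>m\<in>M. m \<le> n"
  shows "(LEAST n. n \<in> M) = (LEAST n. n \<in> N)"
proof (cases "M = {}")
  case True
  then have "N = {}" using NM by blast
  with True show ?thesis by simp
next
  case False
  then obtain a b where "a \<in> M" "b \<in> N" using MN by blast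
  obtain m where "m \<in> N" "m \<le> (LEAST n. n \<in> M)" using MN[OF LeastI[of "\<lambda>n. n \<in> M", OF \<open>a \<in> M\<close>]] by blast
  moreover obtain m' where "m' \<in> M" "m' \<le> (LEAST n. n \<in> N)" using NM[OF LeastI[of "\<lambda>n. n \<in> N", OF \<open>b \<in> N\<close>]] by blast
  ultimately show ?thesis using Least_le[of "\<lambda>n. n \<in> N" m] Least_le[of "\<lambda>n. n \<in> M" m'] by simp
qed

lemma lift_spanning_set:
  assumes "linear \<psi>" and "subspace C" and "subspace R2" and "finite B2"
    and "B2 \<subseteq> sum_set (\<psi> ` C) R2"
  obtains S where "subspace S" and "S \<subseteq> C" and "fin_dim S" and "dim S \<le> card B2"
    and "span B2 \<subseteq> sum_set (\<psi> ` S) R2"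
proof -
  have "\<forall>b\<in>B2. \<exists>c\<in>C. b - \<psi> c \<in> R2"
  proof
    fix b assume "b \<in> B2"
    then obtain c r where "c \<in> C" "r \<in> R2" "b = \<psi> c + r"
      using assms(5) by (blast elim: sum_set_imageE)
    then show "\<exists>c\<in>C. b - \<psi> c \<in> R2" by (intro bexI[of _ c]) simp_all
  qed
  then obtain lift where lift: "\<And>b. b \<in> B2 \<Longrightarrow> lift b \<in> C \<and> b - \<psi> (lift b) \<in> R2"
    by metis
  define S where "S = span (lift ` B2)"
  have "S \<subseteq> C" unfolding S_def using lift \<open>subspace C\<close> by (intro span_minimal) auto
  moreover have "dim S \<le> card B2"
    using dim_le_card[of S "lift ` B2"] card_image_le[OF \<open>finite B2\<close>, of lift] \<open>finite B2\<close>
    by (simp add: S_def)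
  moreover have "span B2 \<subseteq> sum_set (\<psi> ` S) R2"
  proof -
    have "b \<in> sum_set (\<psi> ` S) R2" if "b \<in> B2" for b
    proof -
      have "lift b \<in> S" using that by (simp add: S_def span_base)
      then show ?thesis using lift[OF that] unfolding mem_sum_set
        by (intro bexI[of _ "\<psi> (lift b)"] bexI[of _ "b - \<psi> (lift b)"]) auto
    qed
    moreover have "subspace (sum_set (\<psi> ` S) R2)"
      using \<open>linear \<psi>\<close> \<open>subspace R2\<close> by (simp add: S_def subspace_sum_set linear_subspace_image)
    ultimately show ?thesis by (intro span_minimal) auto
  qed
  moreover have "fin_dim S" using \<open>finite B2\<close> unfolding S_def fin_dim_def by blast
  ultimately show thesis using that[of S] by (simp add: S_def)
qed

lemma complement_dims_vimage:
  assumes "linear \<psi>" and "subspace C" and "subspace R2" and "\<psi> ` C \<subseteq> C2"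
    and cover: "C2 \<subseteq> sum_set (\<psi> ` C) R2" and "n \<in> complement_dims C2 R2"
  shows "\<exists>m\<in>complement_dims C (C \<inter> \<psi> -` R2). m \<le> n"
proof -
  obtain S2 where S2: "S2 \<subseteq> C2" "fin_dim S2" "dim S2 = n" "sum_set R2 S2 = C2"
    using \<open>n \<in> complement_dims C2 R2\<close> by (auto simp: complement_dims_def)
  obtain B2 where B2: "finite B2" "span B2 = S2" "card B2 = dim S2"
    using fin_dim_basis[OF S2(2)] by metis
  then have "B2 \<subseteq> sum_set (\<psi> ` C) R2" using S2(1) cover span_base by blast
  then obtain S where S: "subspace S" "S \<subseteq> C" "fin_dim S" "dim S \<le> n"
    and S2_lift: "S2 \<subseteq> sum_set (\<psi> ` S) R2"
    using lift_spanning_set[OF assms(1-3) B2(1)] B2(2,3) S2(3) by metis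
  have "sum_set (C \<inter> \<psi> -` R2) S = C"
  proof
    show "sum_set (C \<inter> \<psi> -` R2) S \<subseteq> C"
      using S(2) by (auto simp: mem_sum_set intro!: subspace_add[OF \<open>subspace C\<close>])
    show "C \<subseteq> sum_set (C \<inter> \<psi> -` R2) S"
    proof
      fix x assume "x \<in> C"
      then have "\<psi> x \<in> sum_set R2 S2" using \<open>\<psi> ` C \<subseteq> C2\<close> S2(4) by auto
      then obtain r2 s2 where "r2 \<in> R2" "s2 \<in> S2" "\<psi> x = r2 + s2" by (auto simp: mem_sum_set)
      moreover obtain s r2' where "s \<in> S" "r2' \<in> R2" "s2 = \<psi> s + r2'"
        using S2_lift \<open>s2 \<in> S2\<close> by (blast elim: sum_set_imageE)
      ultimately have "\<psi> (x - s) = r2 + r2'"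
        using \<open>linear \<psi>\<close> by (simp add: linear_diff)
      then have "x - s \<in> C \<inter> \<psi> -` R2"
        using \<open>x \<in> C\<close> \<open>s \<in> S\<close> S(2) \<open>r2 \<in> R2\<close> \<open>r2' \<in> R2\<close> \<open>subspace C\<close> \<open>subspace R2\<close>
        by (auto simp: subspace_diff subspace_add)
      with \<open>s \<in> S\<close> show "x \<in> sum_set (C \<inter> \<psi> -` R2) S"
        unfolding mem_sum_set by (metis diff_add_cancel)
    qed
  qed
  then have "dim S \<in> complement_dims C (C \<inter> \<psi> -` R2)"
    using S unfolding complement_dims_def by blast
  with \<open>dim S \<le> n\<close> show ?thesis by blast
qed

lemma complement_dims_image:
  assumes "linear \<psi>" and "subspace C2" and "subspace R2" and "R2 \<subseteq> C2" and "\<psi> ` C \<subseteq> C2"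
    and cover: "C2 \<subseteq> sum_set (\<psi> ` C) R2" and "n \<in> complement_dims C (C \<inter> \<psi> -` R2)"
  shows "\<exists>m\<in>complement_dims C2 R2. m \<le> n"
proof -
  obtain S where S: "subspace S" "S \<subseteq> C" "fin_dim S" "dim S = n" "sum_set (C \<inter> \<psi> -` R2) S = C"
    using \<open>n \<in> complement_dims C (C \<inter> \<psi> -` R2)\<close> by (auto simp: complement_dims_def)
  have "sum_set R2 (\<psi> ` S) = C2"
  proof
    show "sum_set R2 (\<psi> ` S) \<subseteq> C2"
      using \<open>R2 \<subseteq> C2\<close> \<open>\<psi> ` C \<subseteq> C2\<close> S(2)
      by (auto simp: mem_sum_set intro!: subspace_add[OF \<open>subspace C2\<close>]) blast+
    show "C2 \<subseteq> sum_set R2 (\<psi> ` S)"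
    proof
      fix y assume "y \<in> C2"
      then obtain c r2 where c: "c \<in> C" "r2 \<in> R2" "y = \<psi> c + r2"
        using cover by (blast elim: sum_set_imageE)
      then have "c \<in> sum_set (C \<inter> \<psi> -` R2) S" using S(5) by simp
      then obtain r s where "r \<in> C \<inter> \<psi> -` R2" "s \<in> S" "c = r + s"
        unfolding mem_sum_set by blast
      then have "y = (\<psi> r + r2) + \<psi> s" and "\<psi> r + r2 \<in> R2"
        using c \<open>linear \<psi>\<close> \<open>subspace R2\<close> by (auto simp: linear_add subspace_add)
      with \<open>s \<in> S\<close> show "y \<in> sum_set R2 (\<psi> ` S)" by (auto simp: mem_sum_set)
    qed
  qed
  then have "dim (\<psi> ` S) \<in> complement_dims C2 R2"
    using S(2,3) \<open>\<psi> ` C \<subseteq> C2\<close> \<open>linear \<psi>\<close> S(1)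
    unfolding complement_dims_def by (auto intro!: exI[of _ "\<psi> ` S"] linear_subspace_image fin_dim_linear_image)
  with dim_linear_image_le[OF \<open>linear \<psi>\<close> S(3)] S(4) show ?thesis by auto
qed

lemma
  assumes "linear \<psi>" and "subspace C" and "subspace C2" and "subspace R2" and "R2 \<subseteq> C2"
    and "\<psi> ` C \<subseteq> C2" and "C2 \<subseteq> sum_set (\<psi> ` C) R2"
  shows finite_codim_vimage_iff: "finite_codim C (C \<inter> \<psi> -` R2) \<longleftrightarrow> finite_codim C2 R2"
    and codim_vimage: "codim C (C \<inter> \<psi> -` R2) = codim C2 R2"
  using complement_dims_vimage[OF assms(1,2,4,6,7)] complement_dims_image[OF assms(1,3-7)]
  by (simp_all add: finite_codim_iff_complement_dims codim_eq_Least_complement_dims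
      Least_eq_if_mutually_dominated) blast

lemma
  assumes "linear \<psi>" and "surj \<psi>" and "subspace R"
  shows finite_codim_vimage_surj_iff: "finite_codim UNIV (\<psi> -` R) \<longleftrightarrow> finite_codim UNIV R"
    and codim_vimage_surj: "codim UNIV (\<psi> -` R) = codim UNIV R"
proof -
  have "UNIV \<subseteq> sum_set (range \<psi>) R"
  proof
    fix y
    have "0 \<in> R" using \<open>subspace R\<close> by (rule subspace_0)
    moreover have "y \<in> range \<psi>" using \<open>surj \<psi>\<close> by simp
    ultimately show "y \<in> sum_set (range \<psi>) R" by (subst mem_sum_set) force
  qed
  then show "finite_codim UNIV (\<psi> -` R) \<longleftrightarrow> finite_codim UNIV R"
    and "codim UNIV (\<psi> -` R) = codim UNIV R"
    using finite_codim_vimage_iff[OF \<open>linear \<psi>\<close> subspace_UNIV subspace_UNIV \<open>subspace R\<close>]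
      codim_vimage[OF \<open>linear \<psi>\<close> subspace_UNIV subspace_UNIV \<open>subspace R\<close>] by simp_all
qed

section \<open>Fredholm pairs and boundary problems\<close>

lemma closed_subspace_UNIV: "closed_subspace UNIV"
  by (simp add: closed_subspace_def)

lemma closed_subspace_vimage:
  assumes "bounded_linear f" and "closed_subspace B"
  shows "closed_subspace (f -` B)"
  using assms
  by (auto simp: closed_subspace_def bounded_linear.linear linear_subspace_vimage
      intro!: closed_vimage linear_continuous_on)

lemma image_sum_set_vimage:
  assumes "linear Q" and "surj Q"
  shows "Q ` sum_set A (Q -` B) = sum_set (Q ` A) B"
proof
  show "Q ` sum_set A (Q -` B) \<subseteq> sum_set (Q ` A) B"
    by (auto simp: mem_sum_set linear_add[OF \<open>linear Q\<close>] intro!: bexI)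
  show "sum_set (Q ` A) B \<subseteq> Q ` sum_set A (Q -` B)"
  proof
    fix z assume "z \<in> sum_set (Q ` A) B"
    then obtain a b where "a \<in> A" "b \<in> B" "z = Q a + b" by (rule sum_set_imageE)
    have Q_inv: "Q (inv Q b) = b" using \<open>surj Q\<close> by (rule surj_f_inv_f)
    then have "a + inv Q b \<in> sum_set A (Q -` B)"
      using \<open>a \<in> A\<close> \<open>b \<in> B\<close> unfolding mem_sum_set by (intro bexI[of _ a] bexI[of _ "inv Q b"]) simp_all
    moreover have "Q (a + inv Q b) = z"
      using \<open>z = Q a + b\<close> Q_inv by (simp add: linear_add[OF \<open>linear Q\<close>])
    ultimately show "z \<in> Q ` sum_set A (Q -` B)" by blast
  qed
qed

lemma
  fixes Q :: "'a::{real_normed_vector,complete_space} \<Rightarrow> 'b::{real_normed_vector,complete_space}"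
  assumes "bounded_linear Q" and "bij Q"
  shows image_eq_vimage_inv: "Q ` X = inv Q -` X"
    and closed_bij_image_iff: "closed (Q ` X) \<longleftrightarrow> closed X"
proof -
  show Q_image: "Q ` X = inv Q -` X"
    using bij_vimage_eq_inv_image[OF bij_imp_bij_inv[OF \<open>bij Q\<close>]] \<open>bij Q\<close> by (simp add: inv_inv_eq)
  show "closed (Q ` X) \<longleftrightarrow> closed X"
    unfolding Q_image using bounded_linear_inv[OF assms] bij_is_surj[OF bij_imp_bij_inv[OF \<open>bij Q\<close>]]
    by (rule closed_vimage_surj_iff)
qed

lemma
  fixes Q :: "'a::{real_inner,complete_space} \<Rightarrow> 'b::{real_inner,complete_space}"
  assumes "bounded_linear Q" and "bij Q" and "closed_subspace A" and "closed_subspace B"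
  shows fredholm_pair_iso_iff: "fredholm_pair A (Q -` B) \<longleftrightarrow> fredholm_pair (Q ` A) B"
    and fredholm_pair_index_iso: "fredholm_pair_index A (Q -` B) = fredholm_pair_index (Q ` A) B"
proof -
  have "linear Q" and "inj Q" and "surj Q"
    using assms(1,2) by (simp_all add: bounded_linear.linear bij_is_inj bij_is_surj)
  have "closed_subspace (Q -` B)" and "closed_subspace (Q ` A)"
    unfolding image_eq_vimage_inv[OF assms(1,2)]
    using assms bounded_linear_inv[OF assms(1,2)] by (simp_all add: closed_subspace_vimage)
  then have "subspace (A \<inter> Q -` B)" using assms(3)
    by (simp add: closed_subspace_def subspace_inter)
  moreover have "Q ` (A \<inter> Q -` B) = Q ` A \<inter> B" using \<open>inj Q\<close> by (auto simp: inj_eq)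
  ultimately have "fin_dim (Q ` A \<inter> B) \<longleftrightarrow> fin_dim (A \<inter> Q -` B)"
    and "dim (Q ` A \<inter> B) = dim (A \<inter> Q -` B)"
    using fin_dim_inj_image_iff[OF \<open>linear Q\<close>] dim_inj_image[OF \<open>linear Q\<close>]
      inj_on_subset[OF \<open>inj Q\<close>] by (metis subset_UNIV)+
  define R where "R = sum_set A (Q -` B)"
  have "subspace (Q ` R)"
    using \<open>closed_subspace (Q -` B)\<close> assms(3) \<open>linear Q\<close>
    by (simp add: R_def closed_subspace_def subspace_sum_set linear_subspace_image)
  moreover have "Q -` (Q ` R) = R" using \<open>inj Q\<close> by (auto dest: injD)
  ultimately have "finite_codim UNIV R \<longleftrightarrow> finite_codim UNIV (Q ` R)"
    and "codim UNIV R = codim UNIV (Q ` R)"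
    using finite_codim_vimage_surj_iff[OF \<open>linear Q\<close> \<open>surj Q\<close>, of "Q ` R"]
      codim_vimage_surj[OF \<open>linear Q\<close> \<open>surj Q\<close>, of "Q ` R"] by simp_all
  moreover have "Q ` R = sum_set (Q ` A) B"
    unfolding R_def using \<open>linear Q\<close> \<open>surj Q\<close> by (rule image_sum_set_vimage)
  moreover have "closed (Q ` R) \<longleftrightarrow> closed R" using assms(1,2) by (rule closed_bij_image_iff)
  ultimately show "fredholm_pair A (Q -` B) \<longleftrightarrow> fredholm_pair (Q ` A) B"
    and "fredholm_pair_index A (Q -` B) = fredholm_pair_index (Q ` A) B"
    using \<open>closed_subspace (Q -` B)\<close> \<open>closed_subspace (Q ` A)\<close> assms(3,4)
      \<open>fin_dim (Q ` A \<inter> B) \<longleftrightarrow> fin_dim (A \<inter> Q -` B)\<close> \<open>dim (Q ` A \<inter> B) = dim (A \<inter> Q -` B)\<close>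
    by (auto simp: fredholm_pair_def fredholm_pair_index_def R_def)
qed

locale boundary_problem =
  fixes L :: "'e::{real_inner,complete_space} \<Rightarrow> 'f::{real_inner,complete_space}"
    and r0 :: "'e \<Rightarrow> 'h0::{real_inner,complete_space}"
    and r1 :: "'e \<Rightarrow> 'h1::{real_inner,complete_space}"
    and Q :: "'h0 \<Rightarrow> 'h1"
  assumes bounded_linear_L: "bounded_linear L"
    and bounded_linear_r0: "bounded_linear r0"
    and bounded_linear_r1: "bounded_linear r1"
    and bij_r0_L: "bij (\<lambda>x. (r0 x, L x))"
    and bij_r1_L: "bij (\<lambda>x. (r1 x, L x))"
    and Q_def: "Q = r1 \<circ> inv_into {x. L x = 0} r0"
    and surj_r0_r1: "surj (\<lambda>x. (r0 x, r1 x))"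
begin

lemma linear_L: "linear L" and linear_r0: "linear r0" and linear_r1: "linear r1"
  using bounded_linear_L bounded_linear_r0 bounded_linear_r1 by (simp_all add: bounded_linear.linear)

definition solve0 :: "'h0 \<times> 'f \<Rightarrow> 'e" where
  "solve0 = inv (\<lambda>x. (r0 x, L x))"

definition solve1 :: "'h1 \<times> 'f \<Rightarrow> 'e" where
  "solve1 = inv (\<lambda>x. (r1 x, L x))"

lemma r0_solve0 [simp]: "r0 (solve0 (u, f)) = u" and L_solve0 [simp]: "L (solve0 (u, f)) = f"
  using surj_f_inv_f[OF bij_is_surj[OF bij_r0_L], of "(u, f)"] by (simp_all add: solve0_def)

lemma r1_solve1 [simp]: "r1 (solve1 (v, f)) = v" and L_solve1 [simp]: "L (solve1 (v, f)) = f"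
  using surj_f_inv_f[OF bij_is_surj[OF bij_r1_L], of "(v, f)"] by (simp_all add: solve1_def)

lemma solve0_eqI: "r0 x = u \<Longrightarrow> L x = f \<Longrightarrow> solve0 (u, f) = x"
  using inv_f_f[OF bij_is_inj[OF bij_r0_L], of x] by (auto simp: solve0_def)

lemma solve1_eqI: "r1 x = v \<Longrightarrow> L x = f \<Longrightarrow> solve1 (v, f) = x"
  using inv_f_f[OF bij_is_inj[OF bij_r1_L], of x] by (auto simp: solve1_def)

lemma bounded_linear_solve0: "bounded_linear solve0"
  unfolding solve0_def
  by (intro bounded_linear_inv bij_r0_L bounded_linear_Pair bounded_linear_r0 bounded_linear_L)

lemma bounded_linear_solve1: "bounded_linear solve1"
  unfolding solve1_def
  by (intro bounded_linear_inv bij_r1_L bounded_linear_Pair bounded_linear_r1 bounded_linear_L)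

lemma boundary_valuesE:
  obtains x where "r0 x = u" and "r1 x = v"
  using surjD[OF surj_r0_r1, of "(u, v)"] by auto

lemma inj_on_r0_kernel: "inj_on r0 {x. L x = 0}"
  by (rule inj_onI) (metis mem_Collect_eq solve0_eqI)

lemma Q_eq: "Q u = r1 (solve0 (u, 0))"
proof -
  have "inv_into {x. L x = 0} r0 u = solve0 (u, 0)"
    using inv_into_f_f[OF inj_on_r0_kernel, of "solve0 (u, 0)"] by simp
  then show ?thesis by (simp add: Q_def)
qed

definition Q_inv :: "'h1 \<Rightarrow> 'h0" where
  "Q_inv v = r0 (solve1 (v, 0))"

lemma Q_r0: "L x = 0 \<Longrightarrow> Q (r0 x) = r1 x"
  by (simp add: Q_eq solve0_eqI)

lemma Q_inv_r1: "L x = 0 \<Longrightarrow> Q_inv (r1 x) = r0 x"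
  by (simp add: Q_inv_def solve1_eqI)

lemma Q_Q_inv [simp]: "Q (Q_inv v) = v"
  by (simp add: Q_inv_def Q_r0)

lemma Q_inv_Q [simp]: "Q_inv (Q u) = u"
  by (simp add: Q_eq Q_inv_r1)

lemma bij_Q: "bij Q"
  by (rule bij_betw_byWitness[where f' = Q_inv]) auto

lemma bounded_linear_Q: "bounded_linear Q"
proof -
  have "bounded_linear (\<lambda>u. r1 (solve0 (u, 0)))"
    by (intro bounded_linear_compose[OF bounded_linear_r1] bounded_linear_compose[OF bounded_linear_solve0]
        bounded_linear_Pair bounded_linear_ident bounded_linear_zero)
  then show ?thesis by (simp add: Q_eq[abs_def])
qed

lemma bounded_linear_Q_inv: "bounded_linear Q_inv"
  unfolding Q_inv_def
  by (intro bounded_linear_compose[OF bounded_linear_r0] bounded_linear_compose[OF bounded_linear_solve1]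
      bounded_linear_Pair bounded_linear_ident bounded_linear_zero)

lemma linear_Q: "linear Q" and linear_Q_inv: "linear Q_inv"
  using bounded_linear_Q bounded_linear_Q_inv by (simp_all add: bounded_linear.linear)

definition boundary_domain :: "'h0 set \<Rightarrow> 'h1 set \<Rightarrow> 'e set" where
  "boundary_domain B0 B1 = {x. r0 x \<in> B0 \<and> r1 x \<in> B1}"

definition boundary_defect :: "'f \<Rightarrow> 'h0" where
  "boundary_defect f = Q_inv (r1 (solve0 (0, f)))"

lemma bounded_linear_boundary_defect: "bounded_linear boundary_defect"
  unfolding boundary_defect_def[abs_def]
  by (intro bounded_linear_compose[OF bounded_linear_Q_inv] bounded_linear_compose[OF bounded_linear_r1]
      bounded_linear_compose[OF bounded_linear_solve0] bounded_linear_Pair bounded_linear_ident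
      bounded_linear_zero)

lemma surj_boundary_defect: "surj boundary_defect"
proof -
  have "u \<in> range boundary_defect" for u
  proof -
    obtain x where "r0 x = 0" and "r1 x = Q u" by (rule boundary_valuesE)
    then have "boundary_defect (L x) = u" by (simp add: boundary_defect_def solve0_eqI)
    then show ?thesis by blast
  qed
  then show ?thesis by blast
qed

lemma closed_subspace_boundary_domain:
  assumes "closed_subspace B0" and "closed_subspace B1"
  shows "closed_subspace (boundary_domain B0 B1)"
proof -
  have "boundary_domain B0 B1 = r0 -` B0 \<inter> r1 -` B1" by (auto simp: boundary_domain_def)
  then show ?thesis
    using closed_subspace_vimage[OF bounded_linear_r0 assms(1)] closed_subspace_vimage[OF bounded_linear_r1 assms(2)]
    by (simp add: closed_subspace_def subspace_inter closed_Int)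
qed

lemma image_L_boundary_domain:
  assumes "subspace B0"
  shows "L ` boundary_domain B0 B1 = boundary_defect -` sum_set B0 (Q -` B1)"
proof
  show "L ` boundary_domain B0 B1 \<subseteq> boundary_defect -` sum_set B0 (Q -` B1)"
  proof
    fix f assume "f \<in> L ` boundary_domain B0 B1"
    then obtain x where x: "x \<in> boundary_domain B0 B1" and "f = L x" by blast
    define k where "k = x - solve0 (0, L x)"
    have "L k = 0" and "r0 k = r0 x" by (simp_all add: k_def linear_diff[OF linear_L] linear_diff[OF linear_r0])
    then have "Q_inv (r1 x) - boundary_defect (L x) = r0 x"
      using Q_inv_r1[of k]
      by (simp add: k_def boundary_defect_def linear_diff[OF linear_r1] linear_diff[OF linear_Q_inv])
    then have "boundary_defect (L x) = - r0 x + Q_inv (r1 x)" by (simp add: algebra_simps)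
    moreover have "- r0 x \<in> B0" and "Q_inv (r1 x) \<in> Q -` B1"
      using x \<open>subspace B0\<close> by (simp_all add: boundary_domain_def subspace_neg)
    ultimately have "boundary_defect (L x) \<in> sum_set B0 (Q -` B1)"
      unfolding mem_sum_set by blast
    then show "f \<in> boundary_defect -` sum_set B0 (Q -` B1)" using \<open>f = L x\<close> by simp
  qed
  show "boundary_defect -` sum_set B0 (Q -` B1) \<subseteq> L ` boundary_domain B0 B1"
  proof
    fix f assume "f \<in> boundary_defect -` sum_set B0 (Q -` B1)"
    then obtain u w where "u \<in> B0" "Q w \<in> B1" and defect: "boundary_defect f = u + w"
      unfolding vimage_eq mem_sum_set by blast
    define x where "x = solve0 (- u, f)"
    define k where "k = x - solve0 (0, f)"
    have "L k = 0" and "r0 k = - u" by (simp_all add: k_def x_def linear_diff[OF linear_L] linear_diff[OF linear_r0])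
    then have "r1 x = r1 (solve0 (0, f)) + Q (- u)"
      using Q_r0[of k] by (simp add: k_def linear_diff[OF linear_r1])
    also have "\<dots> = Q (boundary_defect f + - u)"
      by (simp add: boundary_defect_def linear_diff[OF linear_Q] linear_neg[OF linear_Q])
    finally have "r1 x = Q w" using defect by simp
    then have "x \<in> boundary_domain B0 B1"
      using \<open>u \<in> B0\<close> \<open>Q w \<in> B1\<close> \<open>subspace B0\<close> by (simp add: boundary_domain_def x_def subspace_neg)
    then show "f \<in> L ` boundary_domain B0 B1" unfolding x_def by (auto intro!: image_eqI[where x = "solve0 (- u, f)"])
  qed
qed

lemma r0_kernel_boundary_domain:
  "r0 ` {x \<in> boundary_domain B0 B1. L x = 0} = B0 \<inter> Q -` B1"
proof
  show "r0 ` {x \<in> boundary_domain B0 B1. L x = 0} \<subseteq> B0 \<inter> Q -` B1"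
    by (auto simp: boundary_domain_def Q_r0)
  show "B0 \<inter> Q -` B1 \<subseteq> r0 ` {x \<in> boundary_domain B0 B1. L x = 0}"
  proof
    fix u assume "u \<in> B0 \<inter> Q -` B1"
    then have "solve0 (u, 0) \<in> {x \<in> boundary_domain B0 B1. L x = 0}"
      by (simp add: boundary_domain_def Q_eq)
    then show "u \<in> r0 ` {x \<in> boundary_domain B0 B1. L x = 0}" by (auto intro!: image_eqI[where x = "solve0 (u, 0)"])
  qed
qed

lemma fredholm_pair_iff_fredholm_op_boundary_domain:
  assumes "closed_subspace B0" and "closed_subspace B1"
  shows "(fredholm_pair B0 (Q -` B1) \<and> fredholm_pair_index B0 (Q -` B1) = k) \<longleftrightarrow>
    (fredholm_op (boundary_domain B0 B1) UNIV L \<and> fredholm_op_index (boundary_domain B0 B1) UNIV L = k)"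
proof -
  let ?D = "boundary_domain B0 B1" and ?S = "sum_set B0 (Q -` B1)"
  have "closed_subspace (Q -` B1)" using assms(2) by (rule closed_subspace_vimage[OF bounded_linear_Q])
  then have "subspace ?S" and "subspace B0"
    using assms(1) by (simp_all add: closed_subspace_def subspace_sum_set)
  have L_D: "L ` ?D = boundary_defect -` ?S"
    using \<open>subspace B0\<close> by (rule image_L_boundary_domain)
  have "subspace {x \<in> ?D. L x = 0}"
    using closed_subspace_boundary_domain[OF assms] linear_L
    by (simp add: closed_subspace_def subspace_inter linear_subspace_kernel Collect_conj_eq)
  moreover have "inj_on r0 {x \<in> ?D. L x = 0}" using inj_on_r0_kernel by (rule inj_on_subset) auto
  ultimately have "fin_dim {x \<in> ?D. L x = 0} \<longleftrightarrow> fin_dim (B0 \<inter> Q -` B1)"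
    and "dim {x \<in> ?D. L x = 0} = dim (B0 \<inter> Q -` B1)"
    using fin_dim_inj_image_iff[OF linear_r0] dim_inj_image[OF linear_r0]
    unfolding r0_kernel_boundary_domain[symmetric] by simp_all
  moreover have "closed (L ` ?D) \<longleftrightarrow> closed ?S"
    unfolding L_D by (rule closed_vimage_surj_iff[OF bounded_linear_boundary_defect surj_boundary_defect])
  moreover have "finite_codim UNIV (L ` ?D) \<longleftrightarrow> finite_codim UNIV ?S"
    and "codim UNIV (L ` ?D) = codim UNIV ?S"
    unfolding L_D using bounded_linear.linear[OF bounded_linear_boundary_defect] surj_boundary_defect
      \<open>subspace ?S\<close> by (rule finite_codim_vimage_surj_iff, rule codim_vimage_surj)
  ultimately show ?thesis
    using assms \<open>closed_subspace (Q -` B1)\<close> closed_subspace_boundary_domain[OF assms] bounded_linear_L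
    unfolding fredholm_pair_def fredholm_pair_index_def fredholm_op_def fredholm_op_index_def
    by (simp add: closed_subspace_UNIV)
qed

definition boundary_operator :: "'h0 set \<Rightarrow> 'h1 set \<Rightarrow> 'e \<Rightarrow> 'h0 \<times> 'h1 \<times> 'f" where
  "boundary_operator B0 B1 x =
     (orth_proj (orthogonal_comp B0) (r0 x), orth_proj (orthogonal_comp B1) (r1 x), L x)"

lemma bounded_linear_boundary_operator: "bounded_linear (boundary_operator B0 B1)"
  unfolding boundary_operator_def[abs_def]
  by (intro bounded_linear_Pair bounded_linear_L
      bounded_linear_compose[OF bounded_linear_orth_proj[OF closed_subspace_orthogonal_comp] bounded_linear_r0]
      bounded_linear_compose[OF bounded_linear_orth_proj[OF closed_subspace_orthogonal_comp] bounded_linear_r1])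

lemma boundary_operator_in:
  "boundary_operator B0 B1 x \<in> orthogonal_comp B0 \<times> orthogonal_comp B1 \<times> UNIV"
  by (simp add: boundary_operator_def orth_proj_in[OF closed_subspace_orthogonal_comp])

lemma boundary_operator_eq_iff:
  assumes "closed_subspace B0" and "closed_subspace B1"
  shows "boundary_operator B0 B1 x = (0, 0, f) \<longleftrightarrow> x \<in> boundary_domain B0 B1 \<and> L x = f"
  by (simp add: boundary_operator_def boundary_domain_def orth_proj_orthogonal_comp_eq_0_iff[OF assms(1)]
      orth_proj_orthogonal_comp_eq_0_iff[OF assms(2)])

lemma zero_fibre_range_boundary_operator:
  assumes "closed_subspace B0" and "closed_subspace B1"
  shows "(0, 0, f) \<in> range (boundary_operator B0 B1) \<longleftrightarrow> f \<in> L ` boundary_domain B0 B1"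
  unfolding image_iff
  by (auto simp: eq_commute[of "(0, 0, f)"] boundary_operator_eq_iff[OF assms])

definition boundary_trace :: "'e \<times> 'f \<Rightarrow> 'h0 \<times> 'h1 \<times> 'f" where
  "boundary_trace p = (r0 (fst p), r1 (fst p), snd p)"

lemma bounded_linear_boundary_trace: "bounded_linear boundary_trace"
  unfolding boundary_trace_def[abs_def]
  by (intro bounded_linear_Pair bounded_linear_snd bounded_linear_compose[OF bounded_linear_r0 bounded_linear_fst]
      bounded_linear_compose[OF bounded_linear_r1 bounded_linear_fst])

lemma surj_boundary_trace: "surj boundary_trace"
proof -
  have "z \<in> range boundary_trace" for z
  proof -
    obtain x where "r0 x = fst z" "r1 x = fst (snd z)" by (rule boundary_valuesE)
    then have "boundary_trace (x, snd (snd z)) = z" by (simp add: boundary_trace_def)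
    then show ?thesis by (metis rangeI)
  qed
  then show ?thesis by blast
qed

lemma closed_image_boundary_trace:
  assumes "closed_subspace B0" and "closed_subspace B1" and "closed (L ` boundary_domain B0 B1)"
  shows "closed (boundary_trace ` {p. snd p - L (fst p) \<in> L ` boundary_domain B0 B1})"
proof (rule closed_saturated_image[OF bounded_linear_boundary_trace surj_boundary_trace])
  let ?D = "boundary_domain B0 B1"
  show "closed {p. snd p - L (fst p) \<in> L ` ?D}"
    using \<open>closed (L ` ?D)\<close> unfolding vimage_def[symmetric, of "\<lambda>p. snd p - L (fst p)"]
    by (intro closed_vimage linear_continuous_on bounded_linear_sub bounded_linear_snd
        bounded_linear_compose[OF bounded_linear_L bounded_linear_fst])
  have "subspace ?D" and "subspace B0" and "subspace B1"
    using closed_subspace_boundary_domain[OF assms(1,2)] assms(1,2) by (simp_all add: closed_subspace_def)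
  then have "subspace (L ` ?D)" using linear_L by (simp add: linear_subspace_image)
  fix p p' assume "boundary_trace p = boundary_trace p'" and p: "p \<in> {p. snd p - L (fst p) \<in> L ` ?D}"
  then have "r0 (fst p' - fst p) = 0" "r1 (fst p' - fst p) = 0" and "snd p' = snd p"
    by (simp_all add: boundary_trace_def linear_diff[OF linear_r0] linear_diff[OF linear_r1])
  then have "fst p' - fst p \<in> ?D"
    using \<open>subspace B0\<close> \<open>subspace B1\<close> by (simp add: boundary_domain_def subspace_0)
  then have "(snd p - L (fst p)) - L (fst p' - fst p) \<in> L ` ?D"
    using p \<open>subspace (L ` ?D)\<close> by (simp add: subspace_diff)
  then show "p' \<in> {p. snd p - L (fst p) \<in> L ` ?D}"
    using \<open>snd p' = snd p\<close> by (simp add: linear_diff[OF linear_L])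
qed

lemma range_boundary_operator:
  assumes "closed_subspace B0" and "closed_subspace B1"
  shows "range (boundary_operator B0 B1) = (orthogonal_comp B0 \<times> orthogonal_comp B1 \<times> UNIV)
    \<inter> boundary_trace ` {p. snd p - L (fst p) \<in> L ` boundary_domain B0 B1}"
    (is "_ = _ \<inter> boundary_trace ` ?Z")
proof (intro equalityI subsetI IntI)
  let ?T = "boundary_operator B0 B1" and ?D = "boundary_domain B0 B1"
  let ?P0 = "orth_proj (orthogonal_comp B0)" and ?P1 = "orth_proj (orthogonal_comp B1)"
  fix z assume "z \<in> range ?T"
  then obtain x where x: "z = ?T x" by blast
  then show "z \<in> orthogonal_comp B0 \<times> orthogonal_comp B1 \<times> UNIV" by (simp add: boundary_operator_in)
  obtain y where y: "r0 y = ?P0 (r0 x)" "r1 y = ?P1 (r1 x)" by (rule boundary_valuesE)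
  have "x - y \<in> ?D"
    using y orth_proj_orthogonal_comp_residual[OF assms(1)] orth_proj_orthogonal_comp_residual[OF assms(2)]
    by (simp add: boundary_domain_def linear_diff[OF linear_r0] linear_diff[OF linear_r1])
  then have "(y, L x) \<in> ?Z" by (auto simp: linear_diff[OF linear_L] intro!: image_eqI)
  moreover have "boundary_trace (y, L x) = z" using x y by (simp add: boundary_trace_def boundary_operator_def)
  ultimately show "z \<in> boundary_trace ` ?Z" by blast
next
  let ?T = "boundary_operator B0 B1" and ?D = "boundary_domain B0 B1"
  let ?P0 = "orth_proj (orthogonal_comp B0)" and ?P1 = "orth_proj (orthogonal_comp B1)"
  fix z assume "z \<in> (orthogonal_comp B0 \<times> orthogonal_comp B1 \<times> UNIV) \<inter> boundary_trace ` ?Z"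
  then obtain x f where z: "z = (r0 x, r1 x, f)" and "(x, f) \<in> ?Z"
    and "r0 x \<in> orthogonal_comp B0" "r1 x \<in> orthogonal_comp B1"
    by (auto simp: boundary_trace_def)
  then obtain d where "d \<in> ?D" "f = L x + L d" by (auto simp: algebra_simps)
  then have "?P0 (r0 d) = 0" and "?P1 (r1 d) = 0"
    using orth_proj_orthogonal_comp_eq_0_iff[OF assms(1)] orth_proj_orthogonal_comp_eq_0_iff[OF assms(2)]
    by (simp_all add: boundary_domain_def)
  then have "?T (x + d) = z"
    using z \<open>f = L x + L d\<close> \<open>r0 x \<in> orthogonal_comp B0\<close> \<open>r1 x \<in> orthogonal_comp B1\<close>
    by (simp add: boundary_operator_def linear_add[OF linear_r0] linear_add[OF linear_r1] linear_add[OF linear_L]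
        linear_add[OF bounded_linear.linear[OF bounded_linear_orth_proj[OF closed_subspace_orthogonal_comp]]]
        orth_proj_id[OF closed_subspace_orthogonal_comp])
  then show "z \<in> range ?T" by (metis rangeI)
qed

lemma closed_range_boundary_operator_iff:
  assumes "closed_subspace B0" and "closed_subspace B1"
  shows "closed (range (boundary_operator B0 B1)) \<longleftrightarrow> closed (L ` boundary_domain B0 B1)"
proof
  assume "closed (range (boundary_operator B0 B1))"
  moreover have "bounded_linear (\<lambda>f::'f. (0::'h0, 0::'h1, f))"
    by (intro bounded_linear_Pair bounded_linear_zero bounded_linear_ident)
  ultimately have "closed ((\<lambda>f. (0::'h0, 0::'h1, f)) -` range (boundary_operator B0 B1))"
    by (intro closed_vimage linear_continuous_on)
  then show "closed (L ` boundary_domain B0 B1)"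
    using zero_fibre_range_boundary_operator[OF assms] by (simp add: vimage_def)
next
  assume "closed (L ` boundary_domain B0 B1)"
  moreover have "closed (orthogonal_comp B0 \<times> orthogonal_comp B1 \<times> (UNIV :: 'f set))"
    using closed_subspace_orthogonal_comp[of B0] closed_subspace_orthogonal_comp[of B1]
    by (intro closed_Times closed_UNIV) (simp_all add: closed_subspace_def)
  ultimately show "closed (range (boundary_operator B0 B1))"
    unfolding range_boundary_operator[OF assms] using closed_image_boundary_trace[OF assms]
    by (simp add: closed_Int)
qed

lemma fredholm_op_boundary_operator_iff:
  assumes "closed_subspace B0" and "closed_subspace B1"
  defines "C \<equiv> orthogonal_comp B0 \<times> orthogonal_comp B1 \<times> (UNIV :: 'f set)"
  shows "(fredholm_op UNIV C (boundary_operator B0 B1) \<and> fredholm_op_index UNIV C (boundary_operator B0 B1) = k)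
    \<longleftrightarrow> (fredholm_op (boundary_domain B0 B1) UNIV L \<and> fredholm_op_index (boundary_domain B0 B1) UNIV L = k)"
proof -
  let ?T = "boundary_operator B0 B1" and ?D = "boundary_domain B0 B1"
  let ?\<psi> = "\<lambda>f::'f. (0::'h0, 0::'h1, f)"
  have "closed_subspace C"
    using closed_subspace_orthogonal_comp[of B0] closed_subspace_orthogonal_comp[of B1]
    by (auto simp: C_def closed_subspace_def intro!: subspace_Times closed_Times)
  have "range ?T \<subseteq> C" unfolding C_def using boundary_operator_in by blast
  have kernel: "{x \<in> UNIV. ?T x = 0} = {x \<in> ?D. L x = 0}"
    using boundary_operator_eq_iff[OF assms(1,2), of _ 0] by (simp add: zero_prod_def)
  have "finite_codim UNIV (L ` ?D) \<longleftrightarrow> finite_codim C (range ?T)"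
    and "codim UNIV (L ` ?D) = codim C (range ?T)"
  proof -
    have "linear ?\<psi>" by (simp add: linear_iff)
    moreover have "UNIV \<inter> ?\<psi> -` range ?T = L ` ?D"
      using zero_fibre_range_boundary_operator[OF assms(1,2)] by auto
    moreover have "range ?\<psi> \<subseteq> C"
      unfolding C_def using subspace_0[OF subspace_orthogonal_comp[of B0]]
        subspace_0[OF subspace_orthogonal_comp[of B1]] by auto
    moreover have "C \<subseteq> sum_set (range ?\<psi>) (range ?T)"
    proof
      fix z assume "z \<in> C"
      then obtain a b f where z: "z = (a, b, f)" "a \<in> orthogonal_comp B0" "b \<in> orthogonal_comp B1"
        by (auto simp: C_def)
      obtain x where "r0 x = a" "r1 x = b" by (rule boundary_valuesE)
      then have "?T x = (a, b, L x)"
        using z by (simp add: boundary_operator_def orth_proj_id[OF closed_subspace_orthogonal_comp])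
      then have "z = ?\<psi> (f - L x) + ?T x" using z by simp
      then show "z \<in> sum_set (range ?\<psi>) (range ?T)" unfolding mem_sum_set by blast
    qed
    moreover have "subspace (range ?T)"
      using linear_subspace_image[OF bounded_linear.linear[OF bounded_linear_boundary_operator] subspace_UNIV] .
    ultimately show "finite_codim UNIV (L ` ?D) \<longleftrightarrow> finite_codim C (range ?T)"
      and "codim UNIV (L ` ?D) = codim C (range ?T)"
      using finite_codim_vimage_iff[of ?\<psi> UNIV C "range ?T"] codim_vimage[of ?\<psi> UNIV C "range ?T"]
        \<open>closed_subspace C\<close> \<open>range ?T \<subseteq> C\<close> by (simp_all add: closed_subspace_def)
  qed
  then show ?thesis
    using kernel \<open>closed_subspace C\<close> \<open>range ?T \<subseteq> C\<close> closed_range_boundary_operator_iff[OF assms(1,2)]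
      closed_subspace_boundary_domain[OF assms(1,2)] bounded_linear_boundary_operator bounded_linear_L
    unfolding fredholm_op_def fredholm_op_index_def by (simp add: closed_subspace_UNIV)
qed

end

theorem proposition3p4:
  fixes L :: "'e::{real_inner,complete_space} \<Rightarrow> 'f::{real_inner,complete_space}"
    and r0 :: "'e \<Rightarrow> 'h0::{real_inner,complete_space}"
    and r1 :: "'e \<Rightarrow> 'h1::{real_inner,complete_space}"
    and Q :: "'h0 \<Rightarrow> 'h1"
    and B0 :: "'h0 set" and B1 :: "'h1 set" and k :: int
  assumes "bounded_linear L" and "bounded_linear r0" and "bounded_linear r1"
    and "bij (\<lambda>x. (r0 x, L x))" and "bij (\<lambda>x. (r1 x, L x))"
    and Q_def: "Q = r1 \<circ> inv_into {x. L x = 0} r0"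
    and "surj (\<lambda>x. (r0 x, r1 x))"
    and "closed_subspace B0" and "closed_subspace B1"
  shows "((fredholm_pair B0 (Q -` B1) \<and> fredholm_pair_index B0 (Q -` B1) = k)
            \<longleftrightarrow> (fredholm_pair (Q ` B0) B1 \<and> fredholm_pair_index (Q ` B0) B1 = k))
       \<and> ((fredholm_pair B0 (Q -` B1) \<and> fredholm_pair_index B0 (Q -` B1) = k)
            \<longleftrightarrow> (fredholm_op UNIV (orthogonal_comp B0 \<times> orthogonal_comp B1 \<times> UNIV)
                   (\<lambda>x. (orth_proj (orthogonal_comp B0) (r0 x), orth_proj (orthogonal_comp B1) (r1 x), L x))
                 \<and> fredholm_op_index UNIV (orthogonal_comp B0 \<times> orthogonal_comp B1 \<times> UNIV)
                   (\<lambda>x. (orth_proj (orthogonal_comp B0) (r0 x), orth_proj (orthogonal_comp B1) (r1 x), L x)) = k))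
       \<and> ((fredholm_pair B0 (Q -` B1) \<and> fredholm_pair_index B0 (Q -` B1) = k)
            \<longleftrightarrow> (fredholm_op {x. orth_proj (orthogonal_comp B0) (r0 x) = 0 \<and> orth_proj (orthogonal_comp B1) (r1 x) = 0} UNIV L
                 \<and> fredholm_op_index {x. orth_proj (orthogonal_comp B0) (r0 x) = 0 \<and> orth_proj (orthogonal_comp B1) (r1 x) = 0} UNIV L = k))"
proof -
  interpret boundary_problem L r0 r1 Q
    using assms(1-7) by (rule boundary_problem.intro)
  have domain: "{x. orth_proj (orthogonal_comp B0) (r0 x) = 0 \<and> orth_proj (orthogonal_comp B1) (r1 x) = 0}
      = boundary_domain B0 B1"
    using orth_proj_orthogonal_comp_eq_0_iff[OF assms(8)] orth_proj_orthogonal_comp_eq_0_iff[OF assms(9)]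
    by (simp add: boundary_domain_def)
  show ?thesis
    unfolding domain boundary_operator_def[symmetric]
    using fredholm_pair_iso_iff[OF bounded_linear_Q bij_Q assms(8,9)]
      fredholm_pair_index_iso[OF bounded_linear_Q bij_Q assms(8,9)]
      fredholm_pair_iff_fredholm_op_boundary_domain[OF assms(8,9)]
      fredholm_op_boundary_operator_iff[OF assms(8,9)]
    by simp
qed

end
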